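(* Let $(K,\delta)$ be a differential field of characteristic zero and $x\in K$ with $\delta(x)=1$, and let $C_K=\{c\in K:\delta(c)=0\}$ be its constant field. Then the set $\mathrm{Stab}(\delta,K)$ of stable elements is a $C_K[x]$-submodule of $K$ (under multiplication in $K$), and $\delta(\mathrm{Stab}(\delta,K))\subseteq\mathrm{Stab}(\delta,K)$.
   Context: A differential field $(K,\delta)$ is a field with an additive map $\delta$ satisfying $\delta(fg)=f\delta(g)+g\delta(f)$. $\mathrm{Stab}(\delta,K)$ is the set of $a\in K$ for which there is a sequence $(a_i)_{i\ge0}$ in $K$ with $a_0=a$ and $\delta(a_{i+1})=a_i$ for all $i\in\mathbb{N}$. *)

theory Defs
  imports "HOL-Computational_Algebra.Polynomial"
begin

definition derivation :: "('a::field \<Rightarrow> 'a) \<Rightarrow> bool" where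
  "derivation \<delta> \<longleftrightarrow> (\<forall>f g. \<delta> (f + g) = \<delta> f + \<delta> g) \<and>
                     (\<forall>f g. \<delta> (f * g) = f * \<delta> g + g * \<delta> f)"

definition constants :: "('a::field \<Rightarrow> 'a) \<Rightarrow> 'a set" where
  "constants \<delta> = {c. \<delta> c = 0}"

definition Stab :: "('a::field \<Rightarrow> 'a) \<Rightarrow> 'a set" where
  "Stab \<delta> = {a. \<exists>s :: nat \<Rightarrow> 'a. s 0 = a \<and> (\<forall>i. \<delta> (s (Suc i)) = s i)}"

definition const_poly_ring :: "('a::field \<Rightarrow> 'a) \<Rightarrow> 'a \<Rightarrow> 'a set" where
  "const_poly_ring \<delta> x = {poly p x | p. \<forall>i. coeff p i \<in> constants \<delta>}"

end

theory Submission
  imports Defs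
begin

text \<open>Each closure property is witnessed by transforming a chain s of successive
  antiderivatives of a termwise: s(i) + t(i) for sums, c s(i) for constants c, and the shifted
  chain \<delta> a, s(0), s(1), ... for \<delta> a. For x a, where \<delta> x = 1, integration by parts gives the
  chain x s(i) - i s(i+1); as C_K[x] is generated by the constants and x, this suffices.\<close>

lemma derivation_add: "derivation \<delta> \<Longrightarrow> \<delta> (f + g) = \<delta> f + \<delta> g"
  unfolding derivation_def by blast

lemma derivation_mult: "derivation \<delta> \<Longrightarrow> \<delta> (f * g) = f * \<delta> g + g * \<delta> f"
  unfolding derivation_def by blast

lemma derivation_zero: "derivation \<delta> \<Longrightarrow> \<delta> 0 = 0"
  using derivation_add[of \<delta> 0 0] by (metis add.right_neutral add_left_cancel)

lemma derivation_diff: "derivation \<delta> \<Longrightarrow> \<delta> (f - g) = \<delta> f - \<delta> g"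
  using derivation_add[of \<delta> "f - g" g] by (simp add: algebra_simps)

lemma derivation_one: "derivation \<delta> \<Longrightarrow> \<delta> 1 = 0"
  using derivation_mult[of \<delta> 1 1] by (metis add.right_neutral add_left_cancel mult_1)

lemma derivation_of_nat: "derivation \<delta> \<Longrightarrow> \<delta> (of_nat n) = 0"
  by (induction n) (simp_all add: derivation_zero derivation_one derivation_add)

lemma derivation_constant_mult: "derivation \<delta> \<Longrightarrow> \<delta> c = 0 \<Longrightarrow> \<delta> (c * f) = c * \<delta> f"
  by (simp add: derivation_mult)

lemma StabI: "s 0 = a \<Longrightarrow> (\<And>i. \<delta> (s (Suc i)) = s i) \<Longrightarrow> a \<in> Stab \<delta>"
  unfolding Stab_def by blast

lemma StabE:
  assumes "a \<in> Stab \<delta>"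
  obtains s where "s 0 = a" and "\<And>i. \<delta> (s (Suc i)) = s i"
  using assms unfolding Stab_def by blast

lemma zero_in_Stab: "derivation \<delta> \<Longrightarrow> 0 \<in> Stab \<delta>"
  by (rule StabI[of "\<lambda>_. 0"]) (simp_all add: derivation_zero)

lemma Stab_add:
  assumes "derivation \<delta>" and "a \<in> Stab \<delta>" and "b \<in> Stab \<delta>"
  shows "a + b \<in> Stab \<delta>"
proof -
  obtain s where "s 0 = a" and s: "\<And>i. \<delta> (s (Suc i)) = s i"
    using \<open>a \<in> Stab \<delta>\<close> by (blast elim: StabE)
  obtain t where "t 0 = b" and t: "\<And>i. \<delta> (t (Suc i)) = t i"
    using \<open>b \<in> Stab \<delta>\<close> by (blast elim: StabE)
  show ?thesis
    by (rule StabI[of "\<lambda>i. s i + t i"])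
       (simp_all add: \<open>s 0 = a\<close> \<open>t 0 = b\<close> s t derivation_add[OF assms(1)])
qed

lemma Stab_constant_mult:
  assumes "derivation \<delta>" and "\<delta> c = 0" and "a \<in> Stab \<delta>"
  shows "c * a \<in> Stab \<delta>"
proof -
  obtain s where "s 0 = a" and s: "\<And>i. \<delta> (s (Suc i)) = s i"
    using \<open>a \<in> Stab \<delta>\<close> by (blast elim: StabE)
  show ?thesis
    by (rule StabI[of "\<lambda>i. c * s i"])
       (simp_all add: \<open>s 0 = a\<close> s derivation_constant_mult[OF assms(1,2)])
qed

lemma Stab_mult_antiderivative_of_one:
  assumes "derivation \<delta>" and "\<delta> x = 1" and "a \<in> Stab \<delta>"
  shows "x * a \<in> Stab \<delta>"
proof -
  obtain s where "s 0 = a" and s: "\<And>i. \<delta> (s (Suc i)) = s i"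
    using \<open>a \<in> Stab \<delta>\<close> by (blast elim: StabE)
  define t where "t i = x * s i - of_nat i * s (Suc i)" for i
  have "\<delta> (t (Suc i)) = t i" for i
  proof -
    have "\<delta> (t (Suc i)) = (x * s i + s (Suc i)) - of_nat (Suc i) * s (Suc i)"
      unfolding t_def
      by (simp add: assms(1,2) s derivation_diff derivation_mult derivation_add
          derivation_one derivation_of_nat)
    also have "\<dots> = t i"
      unfolding t_def by (simp add: algebra_simps)
    finally show ?thesis .
  qed
  moreover have "t 0 = x * a"
    by (simp add: t_def \<open>s 0 = a\<close>)
  ultimately show ?thesis
    by (intro StabI[of t])
qed

lemma Stab_poly_mult:
  assumes "derivation \<delta>" and "\<delta> x = 1" and "\<forall>i. coeff p i \<in> constants \<delta>" and "a \<in> Stab \<delta>"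
  shows "poly p x * a \<in> Stab \<delta>"
  using assms(3)
proof (induction p)
  case 0
  show ?case
    using zero_in_Stab[OF assms(1)] by simp
next
  case (pCons c p)
  have "\<delta> c = 0"
    using pCons.prems[rule_format, of 0] by (simp add: constants_def)
  have "\<forall>i. coeff p i \<in> constants \<delta>"
    using pCons.prems by (metis coeff_pCons_Suc)
  then have "x * (poly p x * a) \<in> Stab \<delta>"
    using pCons.IH assms(1,2) by (rule_tac Stab_mult_antiderivative_of_one) simp_all
  moreover have "c * a \<in> Stab \<delta>"
    using assms(1,4) \<open>\<delta> c = 0\<close> by (simp add: Stab_constant_mult)
  ultimately have "c * a + x * (poly p x * a) \<in> Stab \<delta>"
    using assms(1) by (simp add: Stab_add)
  then show ?case
    by (simp add: algebra_simps)
qed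

lemma Stab_derivative: "a \<in> Stab \<delta> \<Longrightarrow> \<delta> a \<in> Stab \<delta>"
proof -
  assume "a \<in> Stab \<delta>"
  then obtain s where "s 0 = a" and s: "\<And>i. \<delta> (s (Suc i)) = s i"
    by (blast elim: StabE)
  show "\<delta> a \<in> Stab \<delta>"
    by (rule StabI[of "case_nat (\<delta> a) s"]) (simp_all add: \<open>s 0 = a\<close> s split: nat.split)
qed

theorem theorem2p11:
  fixes \<delta> :: "'a::field_char_0 \<Rightarrow> 'a" and x :: 'a
  assumes "derivation \<delta>" and "\<delta> x = 1"
  shows "0 \<in> Stab \<delta>
     \<and> (\<forall>a\<in>Stab \<delta>. \<forall>b\<in>Stab \<delta>. a + b \<in> Stab \<delta>)
     \<and> (\<forall>r\<in>const_poly_ring \<delta> x. \<forall>a\<in>Stab \<delta>. r * a \<in> Stab \<delta>)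
     \<and> \<delta> ` Stab \<delta> \<subseteq> Stab \<delta>"
  using assms
  by (auto simp: const_poly_ring_def zero_in_Stab Stab_add Stab_poly_mult Stab_derivative)

end
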